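(* For every finite multiset $\Gamma$ of IMLL formulas and formula $\varphi$: if $\Gamma\vdash\varphi$ (derivable in NIMLL), then $\Gamma\Vdash\varphi$.
   Context: Fix a countably infinite set $\mathbb{A}$ of atoms. IMLL formulas: $\varphi::= p\in\mathbb{A}\mid\varphi\otimes\varphi\mid \mathrm{I}\mid\varphi\multimap\varphi$. Collections are finite multisets; "$,$" denotes multiset union, $\emptyset$ the empty multiset. NIMLL is the sequent-style natural deduction system with rules: (ax) $\varphi\triangleright\varphi$; ($\multimap$I) from $\Gamma,\varphi\triangleright\psi$ infer $\Gamma\triangleright\varphi\multimap\psi$; ($\multimap$E) from $\Gamma\triangleright\varphi\multimap\psi$ and $\Delta\triangleright\varphi$ infer $\Gamma,\Delta\triangleright\psi$; ($\mathrm{I}$I) $\emptyset\triangleright\mathrm{I}$; ($\mathrm{I}$E) from $\Gamma\triangleright\varphi$ and $\Delta\triangleright\mathrm{I}$ infer $\Gamma,\Delta\triangleright\varphi$; ($\otimes$I) from $\Gamma\triangleright\varphi$ and $\Delta\triangleright\psi$ infer $\Gamma,\Delta\triangleright\varphi\otimes\psi$; ($\otimes$E) from $\Gamma\triangleright\varphi\otimes\psi$ and $\Delta,\varphi,\psi\triangleright\chi$ infer $\Gamma,\Delta\triangleright\chi$. $\Gamma\vdash\varphi$ means $\Gamma\triangleright\varphi$ is derivable. An atomic rule is $(P_1\triangleright p_1,\dots,P_n\triangleright p_n)\Rightarrow p$ ($n\ge0$, $P_i$ finite multisets of atoms); a base is a set of atomic rules. Derivability $\vdash_{\mathscr{B}}$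 is the least relation with (Ref) $[p]\vdash_{\mathscr{B}}p$; (App) if $(P_1\triangleright p_1,\dots,P_n\triangleright p_n)\Rightarrow p\in\mathscr{B}$ and $S_i,P_i\vdash_{\mathscr{B}}p_i$ for all $i$, then $S_1,\dots,S_n\vdash_{\mathscr{B}}p$. Support: (At) $\Vdash^{P}_{\mathscr{B}}p$ iff $P\vdash_{\mathscr{B}}p$; ($\otimes$) $\Vdash^{P}_{\mathscr{B}}\varphi\otimes\psi$ iff for every $\mathscr{X}\supseteq\mathscr{B}$, multiset of atoms $U$, atom $p$, if $\varphi,\psi\Vdash^{U}_{\mathscr{X}}p$ then $\Vdash^{P,U}_{\mathscr{X}}p$; ($\mathrm{I}$) $\Vdash^{P}_{\mathscr{B}}\mathrm{I}$ iff for every $\mathscr{X}\supseteq\mathscr{B}$, $U$, $p$, if $\Vdash^{U}_{\mathscr{X}}p$ then $\Vdash^{P,U}_{\mathscr{X}}p$; ($\multimap$) $\Vdash^{P}_{\mathscr{B}}\varphi\multimap\psi$ iff $\varphi\Vdash^{P}_{\mathscr{B}}\psi$; (comma) for nonempty $\Gamma,\Delta$, $\Vdash^{P}_{\mathscr{B}}\Gamma,\Delta$ iff $P=U,V$ for some $U,V$ with $\Vdash^{U}_{\mathscr{B}}\Gamma$, $\Vdash^{V}_{\mathscr{B}}\Delta$ (singleton $[\varphi]$ supported iff $\varphi$ is); (Inf) for nonempty $\Gamma$, $\Gamma\Vdash^{P}_{\mathscr{B}}\varphi$ iff for every $\mathscr{X}\supseteq\mathscr{B}$ and $U$, if $\Vdash^{U}_{\mathscr{X}}\Gamma$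 then $\Vdash^{P,U}_{\mathscr{X}}\varphi$; for empty $\Gamma$ it means $\Vdash^{P}_{\mathscr{B}}\varphi$. Validity: $\Gamma\Vdash\varphi$ iff $\Gamma\Vdash^{\emptyset}_{\mathscr{B}}\varphi$ for every base $\mathscr{B}$. *)

theory Defs
  imports "HOL-Library.Multiset"
begin

type_synonym atom = nat

datatype frm = At atom | Tens frm frm | One | Lolli frm frm

inductive nd :: "frm multiset \<Rightarrow> frm \<Rightarrow> bool" where
  ax: "nd {#a#} a"
| lolI: "nd (G + {#a#}) b \<Longrightarrow> nd G (Lolli a b)"
| lolE: "nd G (Lolli a b) \<Longrightarrow> nd D a \<Longrightarrow> nd (G + D) b"
| oneI: "nd {#} One"
| oneE: "nd G a \<Longrightarrow> nd D One \<Longrightarrow> nd (G + D) a"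
| tenI: "nd G a \<Longrightarrow> nd D b \<Longrightarrow> nd (G + D) (Tens a b)"
| tenE: "nd G (Tens a b) \<Longrightarrow> nd (D + {#a, b#}) c \<Longrightarrow> nd (G + D) c"

text \<open>An atomic rule (P1 |> p1, ..., Pn |> pn) => p is a pair (list of premises, conclusion);
  a base is a set of atomic rules.\<close>
type_synonym arule = "(atom multiset \<times> atom) list \<times> atom"
type_synonym base = "arule set"

inductive bder :: "base \<Rightarrow> atom multiset \<Rightarrow> atom \<Rightarrow> bool" for B :: base where
  Ref: "bder B {#p#} p"
| App: "(prems, p) \<in> B \<Longrightarrow> length S = length prems \<Longrightarrow>
        (\<forall>i < length prems. bder B (S ! i + fst (prems ! i)) (snd (prems ! i))) \<Longrightarrow>
        bder B (sum_list S) p"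

text \<open>Support of a single formula, by recursion on the formula.  In the tensor clause,
  the judgement  a, b ||-^U_X p  is unfolded via (Inf) and (comma).\<close>
fun supp :: "base \<Rightarrow> atom multiset \<Rightarrow> frm \<Rightarrow> bool" where
  "supp B P (At p) = bder B P p"
| "supp B P (Tens a b) =
     (\<forall>X U p. B \<subseteq> X \<longrightarrow>
        (\<forall>Y V1 V2. X \<subseteq> Y \<longrightarrow> supp Y V1 a \<longrightarrow> supp Y V2 b \<longrightarrow> bder Y (U + (V1 + V2)) p)
        \<longrightarrow> bder X (P + U) p)"
| "supp B P One = (\<forall>X U p. B \<subseteq> X \<longrightarrow> bder X U p \<longrightarrow> bder X (P + U) p)"
| "supp B P (Lolli a b) = (\<forall>X U. B \<subseteq> X \<longrightarrow> supp X U a \<longrightarrow> supp X (P + U) b)"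

fun suppL :: "base \<Rightarrow> atom multiset \<Rightarrow> frm list \<Rightarrow> bool" where
  "suppL B P [] = (P = {#})"
| "suppL B P (a # as) = (\<exists>U V. P = U + V \<and> supp B U a \<and> suppL B V as)"

definition suppM :: "base \<Rightarrow> atom multiset \<Rightarrow> frm multiset \<Rightarrow> bool" where
  "suppM B P G = (\<exists>xs. mset xs = G \<and> suppL B P xs)"

definition inf_supp :: "base \<Rightarrow> atom multiset \<Rightarrow> frm multiset \<Rightarrow> frm \<Rightarrow> bool" where
  "inf_supp B P G a =
     (if G = {#} then supp B P a
      else (\<forall>X U. B \<subseteq> X \<longrightarrow> suppM X U G \<longrightarrow> supp X (P + U) a))"

definition valid :: "frm multiset \<Rightarrow> frm \<Rightarrow> bool" where
  "valid G a = (\<forall>B. inf_supp B {#} G a)"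

end

theory Submission
  imports Defs
begin

text \<open>Soundness is proved by induction on NIMLL derivations, for the stronger claim that a
  derivable sequent is supported at every base and resource that support its context.  The eliminations of \<open>\<otimes>\<close> and \<open>I\<close> are the only real
  work: their support clauses only permit elimination into atoms, and an induction on the
  conclusion formula lifts such an atomic elimination to an arbitrary conclusion.\<close>

lemma bder_mono: "bder B P p \<Longrightarrow> B \<subseteq> C \<Longrightarrow> bder C P p"
proof (induction rule: bder.induct)
  case Ref
  show ?case by (rule bder.Ref)
next
  case (App prems p S)
  then show ?case by (intro bder.App) auto
qed

lemma supp_mono: "supp B P c \<Longrightarrow> B \<subseteq> C \<Longrightarrow> supp C P c"
  by (cases c) (auto intro: bder_mono dest: order_trans)

lemma suppL_mono: "suppL B P xs \<Longrightarrow> B \<subseteq> C \<Longrightarrow> suppL C P xs"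
  by (induction xs arbitrary: P) (auto intro: supp_mono)

lemma suppM_mono: "suppM B P G \<Longrightarrow> B \<subseteq> C \<Longrightarrow> suppM C P G"
  unfolding suppM_def using suppL_mono by blast

lemma suppL_append:
  "suppL X U (xs @ ys) \<longleftrightarrow> (\<exists>U1 U2. U = U1 + U2 \<and> suppL X U1 xs \<and> suppL X U2 ys)"
proof (induction xs arbitrary: U)
  case Nil
  then show ?case by auto
next
  case (Cons a xs)
  show ?case
  proof
    assume "suppL X U ((a # xs) @ ys)"
    then obtain V W where "U = V + W" "supp X V a" "suppL X W (xs @ ys)" by auto
    with Cons obtain W1 W2 where "W = W1 + W2" "suppL X W1 xs" "suppL X W2 ys" by blast
    with \<open>U = V + W\<close> \<open>supp X V a\<close>
    show "\<exists>U1 U2. U = U1 + U2 \<and> suppL X U1 (a # xs) \<and> suppL X U2 ys"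
      by (intro exI[of _ "V + W1"] exI[of _ W2]) (auto simp: add.assoc)
  next
    assume "\<exists>U1 U2. U = U1 + U2 \<and> suppL X U1 (a # xs) \<and> suppL X U2 ys"
    then obtain U2 V W where "U = V + W + U2" "supp X V a" "suppL X W xs" "suppL X U2 ys"
      by auto
    moreover from this Cons have "suppL X (W + U2) (xs @ ys)" by blast
    ultimately show "suppL X U ((a # xs) @ ys)" by (auto simp: add.assoc)
  qed
qed

lemma suppL_mset_cong: "mset xs = mset ys \<Longrightarrow> suppL X U xs \<Longrightarrow> suppL X U ys"
proof (induction xs arbitrary: ys U)
  case Nil
  then show ?case by simp
next
  case (Cons a xs)
  then have "a \<in> set ys" by (metis list.set_intros(1) set_mset_mset)
  then obtain ys1 ys2 where ys: "ys = ys1 @ a # ys2" by (meson split_list)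
  from Cons.prems(2) obtain V W where U: "U = V + W" "supp X V a" "suppL X W xs" by auto
  from Cons.prems(1) ys have "mset xs = mset (ys1 @ ys2)" by simp
  with Cons.IH U have "suppL X W (ys1 @ ys2)" by blast
  then obtain W1 W2 where W: "W = W1 + W2" "suppL X W1 ys1" "suppL X W2 ys2"
    using suppL_append by blast
  with U have "suppL X (W1 + (V + W2)) (ys1 @ a # ys2)"
    using suppL_append by fastforce
  with ys U W show ?case by (simp add: ac_simps)
qed

lemma suppM_plus:
  "suppM X U (G + D) \<longleftrightarrow> (\<exists>U1 U2. U = U1 + U2 \<and> suppM X U1 G \<and> suppM X U2 D)"
proof
  assume "suppM X U (G + D)"
  then obtain xs where xs: "mset xs = G + D" "suppL X U xs" unfolding suppM_def by blast
  obtain xs1 xs2 where "mset xs1 = G" "mset xs2 = D" using ex_mset by metis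
  moreover from this xs have "suppL X U (xs1 @ xs2)" using suppL_mset_cong by fastforce
  ultimately show "\<exists>U1 U2. U = U1 + U2 \<and> suppM X U1 G \<and> suppM X U2 D"
    using suppL_append unfolding suppM_def by blast
next
  assume "\<exists>U1 U2. U = U1 + U2 \<and> suppM X U1 G \<and> suppM X U2 D"
  then obtain U1 U2 xs1 xs2 where "U = U1 + U2" "mset xs1 = G" "suppL X U1 xs1"
    "mset xs2 = D" "suppL X U2 xs2" unfolding suppM_def by blast
  then show "suppM X U (G + D)" unfolding suppM_def
    by (intro exI[of _ "xs1 @ xs2"]) (auto simp: suppL_append)
qed

lemma suppM_plusE:
  assumes "suppM X U (G + D)"
  obtains U1 U2 where "U = U1 + U2" "suppM X U1 G" "suppM X U2 D"
  using assms suppM_plus by blast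

lemma suppM_single: "suppM X U {#a#} \<longleftrightarrow> supp X U a"
proof -
  have "mset xs = {#a#} \<longleftrightarrow> xs = [a]" for xs :: "frm list" by auto
  then show ?thesis unfolding suppM_def by auto
qed

lemma suppM_empty: "suppM X U {#} \<longleftrightarrow> U = {#}"
  unfolding suppM_def by auto

text \<open>The common shape of the support clauses of \<open>\<otimes>\<close> (with \<open>\<Phi>\<close> supporting \<open>a, b\<close>) and of
  \<open>I\<close> (with \<open>\<Phi>\<close> the empty resource).\<close>

definition eliminates :: "base \<Rightarrow> atom multiset \<Rightarrow> (base \<Rightarrow> atom multiset \<Rightarrow> bool) \<Rightarrow> bool" where
  "eliminates B P \<Phi> \<longleftrightarrow>
     (\<forall>X U p. B \<subseteq> X \<longrightarrow> (\<forall>Y V. X \<subseteq> Y \<longrightarrow> \<Phi> Y V \<longrightarrow> bder Y (U + V) p) \<longrightarrow> bder X (P + U) p)"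

lemma eliminatesD:
  "eliminates B P \<Phi> \<Longrightarrow> B \<subseteq> X \<Longrightarrow>
   (\<And>Y V. X \<subseteq> Y \<Longrightarrow> \<Phi> Y V \<Longrightarrow> bder Y (U + V) p) \<Longrightarrow> bder X (P + U) p"
  unfolding eliminates_def by blast

lemma eliminates_supp:
  assumes "eliminates B P \<Phi>" "B \<subseteq> X" "\<And>Y V. X \<subseteq> Y \<Longrightarrow> \<Phi> Y V \<Longrightarrow> supp Y (U + V) c"
  shows "supp X (P + U) c"
  using assms(2,3)
proof (induction c arbitrary: X U)
  case (At p)
  then show ?case using eliminatesD[OF assms(1)] by simp
next
  case (Tens c1 c2)
  show ?case unfolding supp.simps
  proof (intro allI impI)
    fix Z W q
    assume Z: "X \<subseteq> Z" and W: "\<forall>Y V1 V2. Z \<subseteq> Y \<longrightarrow> supp Y V1 c1 \<longrightarrow> supp Y V2 c2 \<longrightarrow>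
        bder Y (W + (V1 + V2)) q"
    have "bder Z (P + (U + W)) q"
    proof (rule eliminatesD[OF assms(1) order_trans[OF Tens.prems(1) Z]])
      fix Y V assume Y: "Z \<subseteq> Y" and "\<Phi> Y V"
      with Z Tens.prems(2) have "supp Y (U + V) (Tens c1 c2)" by (meson order_trans)
      moreover from W Y have "\<forall>Y' V1 V2. Y \<subseteq> Y' \<longrightarrow> supp Y' V1 c1 \<longrightarrow> supp Y' V2 c2 \<longrightarrow>
        bder Y' (W + (V1 + V2)) q" by (meson order_trans)
      ultimately have "bder Y (U + V + W) q" by simp
      then show "bder Y (U + W + V) q" by (simp add: ac_simps)
    qed
    then show "bder Z (P + U + W) q" by (simp add: ac_simps)
  qed
next
  case One
  show ?case unfolding supp.simps
  proof (intro allI impI)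
    fix Z W q
    assume Z: "X \<subseteq> Z" and W: "bder Z W q"
    have "bder Z (P + (U + W)) q"
    proof (rule eliminatesD[OF assms(1) order_trans[OF One.prems(1) Z]])
      fix Y V assume Y: "Z \<subseteq> Y" and "\<Phi> Y V"
      with Z One.prems(2) have "supp Y (U + V) One" by (meson order_trans)
      moreover from W Y have "bder Y W q" by (rule bder_mono)
      ultimately have "bder Y (U + V + W) q" by simp
      then show "bder Y (U + W + V) q" by (simp add: ac_simps)
    qed
    then show "bder Z (P + U + W) q" by (simp add: ac_simps)
  qed
next
  case (Lolli c1 c2)
  show ?case unfolding supp.simps
  proof (intro allI impI)
    fix Z W
    assume Z: "X \<subseteq> Z" and W: "supp Z W c1"
    have "supp Z (P + (U + W)) c2"
    proof (rule Lolli.IH(2)[OF order_trans[OF Lolli.prems(1) Z]])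
      fix Y V assume Y: "Z \<subseteq> Y" and "\<Phi> Y V"
      with Z Lolli.prems(2) have "supp Y (U + V) (Lolli c1 c2)" by (meson order_trans)
      moreover from W Y have "supp Y W c1" by (rule supp_mono)
      ultimately have "supp Y (U + V + W) c2" by simp
      then show "supp Y (U + W + V) c2" by (simp add: ac_simps)
    qed
    then show "supp Z (P + U + W) c2" by (simp add: ac_simps)
  qed
qed

lemma supp_Tens_eliminates:
  assumes "supp B P (Tens a b)"
  shows "eliminates B P (\<lambda>Y V. \<exists>V1 V2. V = V1 + V2 \<and> supp Y V1 a \<and> supp Y V2 b)"
  unfolding eliminates_def
proof (intro allI impI)
  fix X U p
  assume "B \<subseteq> X" and "\<forall>Y V. X \<subseteq> Y \<longrightarrow> (\<exists>V1 V2. V = V1 + V2 \<and> supp Y V1 a \<and> supp Y V2 b)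
    \<longrightarrow> bder Y (U + V) p"
  then have "\<forall>Y V1 V2. X \<subseteq> Y \<longrightarrow> supp Y V1 a \<longrightarrow> supp Y V2 b \<longrightarrow> bder Y (U + (V1 + V2)) p"
    by blast
  with assms \<open>B \<subseteq> X\<close> show "bder X (P + U) p" by simp
qed

lemma supp_One_eliminates: "supp B P One \<Longrightarrow> eliminates B P (\<lambda>Y V. V = {#})"
  unfolding eliminates_def by simp

lemma supp_Tens_intro:
  assumes "supp X U1 a" "supp X U2 b"
  shows "supp X (U1 + U2) (Tens a b)"
proof (unfold supp.simps, intro allI impI)
  fix Y U p
  assume "X \<subseteq> Y" and "\<forall>Z V1 V2. Y \<subseteq> Z \<longrightarrow> supp Z V1 a \<longrightarrow> supp Z V2 b \<longrightarrow>
    bder Z (U + (V1 + V2)) p"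
  with assms have "bder Y (U + (U1 + U2)) p" by (meson order_refl supp_mono)
  then show "bder Y (U1 + U2 + U) p" by (simp add: ac_simps)
qed

lemma nd_supp_sound: "nd G a \<Longrightarrow> suppM X U G \<Longrightarrow> supp X U a"
proof (induction arbitrary: X U rule: nd.induct)
  case (ax a)
  then show ?case by (simp add: suppM_single)
next
  case (lolI G a b)
  show ?case unfolding supp.simps
  proof (intro allI impI)
    fix Y W assume "X \<subseteq> Y" "supp Y W a"
    moreover from lolI.prems \<open>X \<subseteq> Y\<close> have "suppM Y U G" by (rule suppM_mono)
    ultimately have "suppM Y (U + W) (G + {#a#})" unfolding suppM_plus suppM_single by blast
    then show "supp Y (U + W) b" by (rule lolI.IH)
  qed
next
  case (lolE G a b D)
  from lolE.prems obtain U1 U2 where "U = U1 + U2" "suppM X U1 G" "suppM X U2 D"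
    by (rule suppM_plusE)
  with lolE.IH show ?case by fastforce
next
  case oneI
  then show ?case by (simp add: suppM_empty)
next
  case (oneE G a D)
  from oneE.prems obtain U1 U2 where "U = U1 + U2" "suppM X U1 G" "suppM X U2 D"
    by (rule suppM_plusE)
  with oneE.IH have a: "supp X U1 a" and "supp X U2 One" by auto
  from this(2) have "supp X (U2 + U1) a"
  proof (rule eliminates_supp[OF supp_One_eliminates order_refl])
    fix Y and V :: "atom multiset" assume "X \<subseteq> Y" "V = {#}"
    with supp_mono[OF a] show "supp Y (U1 + V) a" by simp
  qed
  with \<open>U = U1 + U2\<close> show ?case by (simp add: ac_simps)
next
  case (tenI G a D b)
  from tenI.prems obtain U1 U2 where "U = U1 + U2" "suppM X U1 G" "suppM X U2 D"
    by (rule suppM_plusE)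
  with tenI.IH show ?case using supp_Tens_intro by blast
next
  case (tenE G a b D c)
  from tenE.prems obtain U1 U2 where U: "U = U1 + U2" "suppM X U1 G" "suppM X U2 D"
    by (rule suppM_plusE)
  from U(2) have "supp X U1 (Tens a b)" by (rule tenE.IH(1))
  then have "supp X (U1 + U2) c"
  proof (rule eliminates_supp[OF supp_Tens_eliminates order_refl])
    fix Y V
    assume "X \<subseteq> Y" and "\<exists>V1 V2. V = V1 + V2 \<and> supp Y V1 a \<and> supp Y V2 b"
    then obtain V1 V2 where V: "V = V1 + V2" "supp Y V1 a" "supp Y V2 b" by blast
    from U(3) \<open>X \<subseteq> Y\<close> have "suppM Y U2 D" by (rule suppM_mono)
    moreover from V(2,3) have "suppM Y V ({#a#} + {#b#})"
      unfolding V(1) suppM_plus suppM_single by blast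
    ultimately have "suppM Y (U2 + V) (D + ({#a#} + {#b#}))"
      unfolding suppM_plus by blast
    then show "supp Y (U2 + V) c" by (intro tenE.IH(2)) (simp add: add_mset_commute)
  qed
  with U(1) show ?case by simp
qed

theorem theorem3:
  fixes G :: "frm multiset" and a :: frm
  assumes "nd G a"
  shows "valid G a"
  using nd_supp_sound[OF assms] by (auto simp: valid_def inf_supp_def suppM_empty)

end
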